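(* Let $\mathbf{c}\in\mathbb{R}^n$, $\mathcal{K}=\{1,\dots,K\}$, and for each $k\in\mathcal{K}$ let $\mathcal{F}_k=\bigcup_{i\in\mathcal{D}_k}\mathcal{C}_{ki}$ with $\mathcal{D}_k$ finite and each $\mathcal{C}_{ki}\subset\mathbb{R}^n$ compact and convex. Let $z^*=\min\{\mathbf{c}^\top\mathbf{x}:\mathbf{x}\in\bigcap_{k\in\mathcal{K}}\mathcal{F}_k\}$. Let $\boldsymbol{\lambda}_1,\dots,\boldsymbol{\lambda}_K\in\mathbb{R}^n$ satisfy $\sum_{k\in\mathcal{K}}\boldsymbol{\lambda}_k=\mathbf{c}$. Let $\mathcal{P}=\{\mathcal{J}_1,\dots,\mathcal{J}_P\}$ be a partition of $\mathcal{K}$, let $\mathcal{Q}=\{1,\dots,P\}$, and for $q\in\mathcal{Q}$ let $\mathcal{F}_q'=\bigcap_{k\in\mathcal{J}_q}\mathcal{F}_k$, written in disjunctive normal form as the union of the compact convex sets $\bigcap_{k\in\mathcal{J}_q}\mathcal{C}_{k,i_k}$ over all choices $(i_k)_{k\in\mathcal{J}_q}\in\prod_{k\in\mathcal{J}_q}\mathcal{D}_k$. Define $$z^{HR}_{\mathcal{Q}}=\inf\{\mathbf{c}^\top\mathbf{x}:\ \mathbf{x}=\mathbf{v}_q,\ \mathbf{v}_q\in\operatorname{cl}\operatorname{conv}(\mathcal{F}'_q)\ \forall q\in\mathcal{Q}\},$$ $$z^{LD}_{\mathcal{Q}}=\sup_{\boldsymbol{\mu}_1,\dots,\boldsymbol{\mu}_P\in\mathbb{R}^n}\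 \inf\Big\{\big(\mathbf{c}-\textstyle\sum_q\boldsymbol{\mu}_q\big)^\top\mathbf{x}+\sum_q\boldsymbol{\mu}_q^\top\mathbf{v}_q:\ \mathbf{x}\in\mathbb{R}^n,\ \mathbf{v}_q\in\mathcal{F}'_q\ \forall q\Big\}.$$ Then $$z^*=L_{\{\mathcal{K}\}}\Big(\sum_{k\in\mathcal{K}}\boldsymbol{\lambda}_k\Big)\ \ge\ z^{HR}_{\mathcal{Q}}\ \ge\ z^{LD}_{\mathcal{Q}}\ \ge\ L_{\mathcal{P}}\Big(\sum_{j\in\mathcal{J}_1}\boldsymbol{\lambda}_j,\dots,\sum_{j\in\mathcal{J}_P}\boldsymbol{\lambda}_j\Big)\ \ge\ LR_{\mathcal{K}}(\boldsymbol{\lambda}_1,\dots,\boldsymbol{\lambda}_K),$$ with $z^{HR}_{\mathcal{Q}}=z^{LD}_{\mathcal{Q}}$ if optimal Lagrange multipliers $\boldsymbol{\mu}_1^*,\dots,\boldsymbol{\mu}_P^*$ for the constraints $\mathbf{x}=\mathbf{v}_q$ of the hull relaxation defining $z^{HR}_{\mathcal{Q}}$ exist.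
   Context: $\operatorname{cl}\operatorname{conv}$ is the closed convex hull; minima/infima over the empty set are $+\infty$. The Lagrangian relaxation is $LR_{\mathcal{K}}(\boldsymbol{\lambda}_1,\dots,\boldsymbol{\lambda}_K)=\inf\{(\mathbf{c}-\sum_k\boldsymbol{\lambda}_k)^\top\mathbf{x}+\sum_k\boldsymbol{\lambda}_k^\top\mathbf{v}_k:\mathbf{x}\in\mathbb{R}^n,\ \mathbf{v}_k\in\mathcal{F}_k\ \forall k\}$. For a partition $\mathcal{P}=\{\mathcal{J}_1,\dots,\mathcal{J}_P\}$ of $\mathcal{K}$ and $\boldsymbol{\mu}_p\in\mathbb{R}^n$, the partition relaxation is $L_{\mathcal{P}}(\boldsymbol{\mu}_1,\dots,\boldsymbol{\mu}_P)=\sum_{p=1}^P\min\{\boldsymbol{\mu}_p^\top\mathbf{v}:\mathbf{v}\in\bigcap_{k\in\mathcal{J}_p}\mathcal{F}_k\}$; in particular $L_{\{\mathcal{K}\}}(\boldsymbol{\mu})=\min\{\boldsymbol{\mu}^\top\mathbf{v}:\mathbf{v}\in\bigcap_{k\in\mathcal{K}}\mathcal{F}_k\}$. Optimal Lagrange multipliers $\boldsymbol{\mu}^*_q$ of the hull relaxation means: $z^{HR}_{\mathcal{Q}}$ is finite and equals $\inf\{(\mathbf{c}-\sum_q\boldsymbol{\mu}_q^* )^\top\mathbf{x}+\sum_q\boldsymbol{\mu}_q^{*\top}\mathbf{v}_q:\mathbf{x}\in\mathbb{R}^n,\ \mathbf{v}_q\in\operatorname{cl}\operatorname{conv}(\mathcal{F}'_q)\}$.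 *)

theory Defs
  imports "HOL-Analysis.Analysis"
begin

text \<open>Index conventions: \<open>\<K> = {1..K}\<close>, \<open>\<Q> = {1..P}\<close>; families of vectors and sets are
  functions on \<open>nat\<close>, only their values at the relevant indices matter.
  All optimal values live in \<open>ereal\<close>; \<open>Inf {} = \<infinity>\<close>.\<close>

definition LR :: "'a::euclidean_space \<Rightarrow> nat \<Rightarrow> (nat \<Rightarrow> 'a set) \<Rightarrow> (nat \<Rightarrow> 'a) \<Rightarrow> ereal" where
  "LR c K F lam = Inf {ereal ((c - (\<Sum>k\<in>{1..K}. lam k)) \<bullet> x + (\<Sum>k\<in>{1..K}. lam k \<bullet> v k)) | x v.
      \<forall>k\<in>{1..K}. v k \<in> F k}"

definition Lpart :: "nat \<Rightarrow> (nat \<Rightarrow> nat set) \<Rightarrow> (nat \<Rightarrow> 'a::euclidean_space set) \<Rightarrow> (nat \<Rightarrow> 'a) \<Rightarrow> ereal" where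
  "Lpart P J F mu = (\<Sum>p\<in>{1..P}. Inf ((\<lambda>v. ereal (mu p \<bullet> v)) ` (\<Inter>k\<in>J p. F k)))"

definition Fq :: "(nat \<Rightarrow> nat set) \<Rightarrow> (nat \<Rightarrow> 'a set) \<Rightarrow> nat \<Rightarrow> 'a set" where
  "Fq J F q = (\<Inter>k\<in>J q. F k)"

definition zHR :: "'a::euclidean_space \<Rightarrow> nat \<Rightarrow> (nat \<Rightarrow> nat set) \<Rightarrow> (nat \<Rightarrow> 'a set) \<Rightarrow> ereal" where
  "zHR c P J F = Inf {ereal (c \<bullet> x) | x v.
      \<forall>q\<in>{1..P}. x = v q \<and> v q \<in> closure (convex hull (Fq J F q))}"

definition zLD :: "'a::euclidean_space \<Rightarrow> nat \<Rightarrow> (nat \<Rightarrow> nat set) \<Rightarrow> (nat \<Rightarrow> 'a set) \<Rightarrow> ereal" where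
  "zLD c P J F = (SUP mu \<in> UNIV.
      Inf {ereal ((c - (\<Sum>q\<in>{1..P}. mu q)) \<bullet> x + (\<Sum>q\<in>{1..P}. mu q \<bullet> v q)) | x v.
        \<forall>q\<in>{1..P}. v q \<in> Fq J F q})"

definition HR_optimal_multipliers :: "'a::euclidean_space \<Rightarrow> nat \<Rightarrow> (nat \<Rightarrow> nat set) \<Rightarrow> (nat \<Rightarrow> 'a set) \<Rightarrow> (nat \<Rightarrow> 'a) \<Rightarrow> bool" where
  "HR_optimal_multipliers c P J F mu \<longleftrightarrow>
     \<bar>zHR c P J F\<bar> \<noteq> \<infinity> \<and>
     zHR c P J F = Inf {ereal ((c - (\<Sum>q\<in>{1..P}. mu q)) \<bullet> x + (\<Sum>q\<in>{1..P}. mu q \<bullet> v q)) | x v.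
        \<forall>q\<in>{1..P}. v q \<in> closure (convex hull (Fq J F q))}"

end

theory Submission
  imports Defs
begin

text \<open>Each inequality is a feasibility argument. A common point \<open>x\<close> of all \<open>F\<^sub>k\<close> gives
  the hull-feasible choice \<open>v\<^sub>q = x\<close>. A minimiser of \<open>\<mu>\<^sub>q\<close> over the compact set \<open>F'\<^sub>q\<close> is
  still a minimiser over its closed convex hull, which gives weak duality. When the multipliers
  sum to \<open>c\<close>, the variable \<open>x\<close> drops out of the Lagrangian, which then splits into the
  block problems of \<open>L\<^sub>\<P>\<close>, and gluing block minimisers gives a feasible point of \<open>LR\<^sub>\<K>\<close>.
  Optimal multipliers close the duality gap, because enlarging \<open>F'\<^sub>q\<close> to its closed convex hull
  can only lower the Lagrangian.\<close>

definition lagrangian_dual :: "'a::euclidean_space \<Rightarrow> nat \<Rightarrow> (nat \<Rightarrow> 'a set) \<Rightarrow> (nat \<Rightarrow> 'a) \<Rightarrow> ereal"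
  where "lagrangian_dual c P S mu =
    Inf {ereal ((c - (\<Sum>q\<in>{1..P}. mu q)) \<bullet> x + (\<Sum>q\<in>{1..P}. mu q \<bullet> v q)) | x v.
      \<forall>q\<in>{1..P}. v q \<in> S q}"

lemma zLD_eq_SUP_lagrangian_dual: "zLD c P J F = (SUP mu. lagrangian_dual c P (Fq J F) mu)"
  unfolding zLD_def lagrangian_dual_def ..

lemma HR_optimal_multipliers_iff:
  "HR_optimal_multipliers c P J F mu \<longleftrightarrow>
     \<bar>zHR c P J F\<bar> \<noteq> \<infinity> \<and>
     zHR c P J F = lagrangian_dual c P (\<lambda>q. closure (convex hull (Fq J F q))) mu"
  unfolding HR_optimal_multipliers_def lagrangian_dual_def ..

lemma lagrangian_dual_le:
  assumes "\<forall>q\<in>{1..P}. v q \<in> S q"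
  shows "lagrangian_dual c P S mu \<le> ereal ((c - (\<Sum>q\<in>{1..P}. mu q)) \<bullet> x + (\<Sum>q\<in>{1..P}. mu q \<bullet> v q))"
  unfolding lagrangian_dual_def using assms by (intro Inf_lower) blast

lemma lagrangian_dual_antimono:
  assumes "\<forall>q\<in>{1..P}. S q \<subseteq> T q"
  shows "lagrangian_dual c P T mu \<le> lagrangian_dual c P S mu"
  unfolding lagrangian_dual_def using assms by (intro Inf_superset_mono) blast

lemma compact_family_attains_inner_min:
  fixes S :: "'b \<Rightarrow> 'a::euclidean_space set"
  assumes "\<forall>q\<in>Q. compact (S q) \<and> S q \<noteq> {}"
  obtains w where "\<forall>q\<in>Q. w q \<in> S q \<and> (\<forall>u\<in>S q. m q \<bullet> w q \<le> m q \<bullet> u)"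
proof -
  have "\<forall>q\<in>Q. \<exists>w\<in>S q. \<forall>u\<in>S q. m q \<bullet> w \<le> m q \<bullet> u"
  proof
    fix q assume "q \<in> Q"
    then have "compact (S q)" "S q \<noteq> {}"
      using assms by auto
    moreover have "continuous_on (S q) (\<lambda>u. m q \<bullet> u)"
      by (intro continuous_intros)
    ultimately show "\<exists>w\<in>S q. \<forall>u\<in>S q. m q \<bullet> w \<le> m q \<bullet> u"
      by (rule continuous_attains_inf)
  qed
  then obtain w where "\<forall>q\<in>Q. w q \<in> S q \<and> (\<forall>u\<in>S q. m q \<bullet> w q \<le> m q \<bullet> u)"
    by (metis bchoice)
  then show ?thesis
    by (rule that)
qed

lemma inner_ge_on_closure_convex_hull:
  fixes S :: "'a::euclidean_space set"
  assumes "\<forall>w\<in>S. a \<le> m \<bullet> w" and "x \<in> closure (convex hull S)"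
  shows "a \<le> m \<bullet> x"
proof -
  have "S \<subseteq> {w. m \<bullet> w \<ge> a}"
    using assms(1) by auto
  then have "convex hull S \<subseteq> {w. m \<bullet> w \<ge> a}"
    by (intro hull_minimal convex_halfspace_ge)
  then have "closure (convex hull S) \<subseteq> {w. m \<bullet> w \<ge> a}"
    by (intro closure_minimal closed_halfspace_ge)
  then show ?thesis using assms(2) by auto
qed

lemma zHR_le_Inf_Inter:
  assumes "(\<Union>q\<in>{1..P}. J q) \<subseteq> A"
  shows "zHR c P J F \<le> Inf ((\<lambda>x. ereal (c \<bullet> x)) ` (\<Inter>k\<in>A. F k))"
  unfolding zHR_def
proof (rule INF_greatest)
  fix x assume x: "x \<in> (\<Inter>k\<in>A. F k)"
  have "x \<in> Fq J F q" if "q \<in> {1..P}" for q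
    using x assms that unfolding Fq_def by blast
  then have "\<forall>q\<in>{1..P}. x \<in> closure (convex hull (Fq J F q))"
    by (meson closure_subset hull_inc subsetD)
  then show "Inf {ereal (c \<bullet> x) | x v.
      \<forall>q\<in>{1..P}. x = v q \<and> v q \<in> closure (convex hull (Fq J F q))} \<le> ereal (c \<bullet> x)"
    by (intro Inf_lower CollectI exI[of _ x] exI[of _ "\<lambda>_. x"]) simp
qed

lemma lagrangian_dual_le_zHR:
  assumes "\<forall>q\<in>{1..P}. compact (Fq J F q)"
  shows "lagrangian_dual c P (Fq J F) mu \<le> zHR c P J F"
  unfolding zHR_def
proof (rule Inf_greatest, clarify)
  fix x v
  assume xv: "\<forall>q\<in>{1..P}. x = v q \<and> v q \<in> closure (convex hull (Fq J F q))"
  have "\<forall>q\<in>{1..P}. Fq J F q \<noteq> {}"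
    using xv by fastforce
  then obtain w where w: "\<forall>q\<in>{1..P}. w q \<in> Fq J F q \<and> (\<forall>u\<in>Fq J F q. mu q \<bullet> w q \<le> mu q \<bullet> u)"
    using assms compact_family_attains_inner_min by metis
  then have "\<forall>q\<in>{1..P}. mu q \<bullet> w q \<le> mu q \<bullet> x"
    using xv inner_ge_on_closure_convex_hull by metis
  then have "(\<Sum>q\<in>{1..P}. mu q \<bullet> w q) \<le> (\<Sum>q\<in>{1..P}. mu q \<bullet> x)"
    by (intro sum_mono) auto
  then have "(c - (\<Sum>q\<in>{1..P}. mu q)) \<bullet> x + (\<Sum>q\<in>{1..P}. mu q \<bullet> w q) \<le> c \<bullet> x"
    by (simp add: inner_diff_left inner_sum_left)
  moreover have "lagrangian_dual c P (Fq J F) mu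
      \<le> ereal ((c - (\<Sum>q\<in>{1..P}. mu q)) \<bullet> x + (\<Sum>q\<in>{1..P}. mu q \<bullet> w q))"
    using w by (intro lagrangian_dual_le) blast
  ultimately show "lagrangian_dual c P (Fq J F) mu \<le> ereal (c \<bullet> x)"
    by (meson ereal_less_eq(3) order.trans)
qed

lemma zLD_le_zHR:
  assumes "\<forall>q\<in>{1..P}. compact (Fq J F q)"
  shows "zLD c P J F \<le> zHR c P J F"
  unfolding zLD_eq_SUP_lagrangian_dual using lagrangian_dual_le_zHR[OF assms] by (rule SUP_least)

lemma zHR_le_zLD_if_optimal_multipliers:
  assumes "HR_optimal_multipliers c P J F mu"
  shows "zHR c P J F \<le> zLD c P J F"
proof -
  have "zHR c P J F = lagrangian_dual c P (\<lambda>q. closure (convex hull (Fq J F q))) mu"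
    using assms unfolding HR_optimal_multipliers_iff by blast
  also have "\<dots> \<le> lagrangian_dual c P (Fq J F) mu"
    by (intro lagrangian_dual_antimono ballI order.trans[OF hull_subset closure_subset])
  also have "\<dots> \<le> zLD c P J F"
    unfolding zLD_eq_SUP_lagrangian_dual by (rule SUP_upper) simp
  finally show ?thesis .
qed

lemma Lpart_le_lagrangian_dual:
  assumes "(\<Sum>q\<in>{1..P}. mu q) = c"
  shows "Lpart P J F mu \<le> lagrangian_dual c P (Fq J F) mu"
  unfolding lagrangian_dual_def
proof (rule Inf_greatest, clarify)
  fix x v assume v: "\<forall>q\<in>{1..P}. v q \<in> Fq J F q"
  have "Lpart P J F mu \<le> (\<Sum>q\<in>{1..P}. ereal (mu q \<bullet> v q))"
    unfolding Lpart_def by (rule sum_mono, rule INF_lower) (use v in \<open>auto simp: Fq_def\<close>)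
  then show "Lpart P J F mu \<le> ereal ((c - (\<Sum>q\<in>{1..P}. mu q)) \<bullet> x + (\<Sum>q\<in>{1..P}. mu q \<bullet> v q))"
    using assms by simp
qed

lemma Lpart_le_zLD:
  assumes "(\<Sum>q\<in>{1..P}. mu q) = c"
  shows "Lpart P J F mu \<le> zLD c P J F"
  unfolding zLD_eq_SUP_lagrangian_dual
  by (rule order.trans[OF Lpart_le_lagrangian_dual[OF assms]]) (rule SUP_upper, simp)

lemma sum_over_partition:
  assumes "disjoint_family_on J Q" and "finite Q"
    and cover: "(\<Union>q\<in>Q. J q) = A" and "finite A"
  shows "sum g A = (\<Sum>q\<in>Q. sum g (J q))"
proof -
  have "\<forall>q\<in>Q. finite (J q)"
    using cover \<open>finite A\<close> by (metis UN_upper finite_subset)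
  then show ?thesis
    unfolding cover[symmetric] using assms(1) by (rule sum.UNION_disjoint_family[OF \<open>finite Q\<close>])
qed

lemma compact_Fq:
  fixes F :: "nat \<Rightarrow> 'a::heine_borel set"
  assumes "J q \<noteq> {}" and "\<forall>k\<in>J q. compact (F k)"
  shows "compact (Fq J F q)"
  unfolding Fq_def using assms by (intro compact_Inter) auto

lemma partition_block_index:
  assumes "disjoint_family_on J Q"
  obtains blk where "\<forall>q\<in>Q. \<forall>k\<in>J q. blk k = q"
proof
  show "\<forall>q\<in>Q. \<forall>k\<in>J q. (SOME p. p \<in> Q \<and> k \<in> J p) = q"
  proof (intro ballI)
    fix q k assume q: "q \<in> Q" "k \<in> J q"
    define p where "p = (SOME p. p \<in> Q \<and> k \<in> J p)"
    have "\<exists>p. p \<in> Q \<and> k \<in> J p"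
      using q by blast
    then have "p \<in> Q \<and> k \<in> J p"
      unfolding p_def by (rule someI_ex)
    then show "p = q"
      using q assms unfolding disjoint_family_on_def by auto
  qed
qed

lemma LR_le_Lpart:
  assumes disj: "disjoint_family_on J {1..P}"
    and cover: "(\<Union>q\<in>{1..P}. J q) = {1..K}"
    and compact: "\<forall>q\<in>{1..P}. compact (Fq J F q)"
  shows "LR c K F lam \<le> Lpart P J F (\<lambda>q. \<Sum>j\<in>J q. lam j)"
proof (cases "\<exists>q\<in>{1..P}. Fq J F q = {}")
  case True
  then obtain q where q: "q \<in> {1..P}" "Fq J F q = {}" by blast
  have "Lpart P J F (\<lambda>q. \<Sum>j\<in>J q. lam j) = \<infinity>"
    unfolding Lpart_def sum_Pinfty using q
    by (intro conjI finite_atLeastAtMost bexI[of _ q]) (auto simp: Fq_def top_ereal_def[symmetric])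
  then show ?thesis by simp
next
  case False
  define mu where "mu = (\<lambda>q. \<Sum>j\<in>J q. lam j)"
  have "\<forall>q\<in>{1..P}. compact (Fq J F q) \<and> Fq J F q \<noteq> {}"
    using False compact by auto
  then obtain w where w: "\<forall>q\<in>{1..P}. w q \<in> Fq J F q \<and> (\<forall>u\<in>Fq J F q. mu q \<bullet> w q \<le> mu q \<bullet> u)"
    by (rule compact_family_attains_inner_min)
  obtain blk where blk: "\<forall>q\<in>{1..P}. \<forall>k\<in>J q. blk k = q"
    by (rule partition_block_index[OF disj])
  have glued_feasible: "w (blk k) \<in> F k" if "k \<in> {1..K}" for k
  proof -
    have "k \<in> (\<Union>q\<in>{1..P}. J q)"
      using that cover by simp
    then obtain q where "q \<in> {1..P}" "k \<in> J q"
      by blast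
    then show ?thesis
      using w blk unfolding Fq_def by auto
  qed
  have "(\<Sum>k\<in>{1..K}. lam k \<bullet> w (blk k)) = (\<Sum>q\<in>{1..P}. \<Sum>k\<in>J q. lam k \<bullet> w (blk k))"
    by (rule sum_over_partition[OF disj finite_atLeastAtMost cover finite_atLeastAtMost])
  also have "\<dots> = (\<Sum>q\<in>{1..P}. \<Sum>k\<in>J q. lam k \<bullet> w q)"
    using blk by (intro sum.cong refl) simp
  also have "\<dots> = (\<Sum>q\<in>{1..P}. mu q \<bullet> w q)"
    by (simp add: mu_def inner_sum_left)
  finally have glued_value: "(\<Sum>k\<in>{1..K}. lam k \<bullet> w (blk k)) = (\<Sum>q\<in>{1..P}. mu q \<bullet> w q)" .
  have "Inf ((\<lambda>v. ereal (mu q \<bullet> v)) ` Fq J F q) = ereal (mu q \<bullet> w q)" if "q \<in> {1..P}" for q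
    using w that by (intro order.antisym INF_lower INF_greatest) auto
  then have "Lpart P J F mu = (\<Sum>q\<in>{1..P}. ereal (mu q \<bullet> w q))"
    unfolding Lpart_def Fq_def by simp
  moreover have "LR c K F lam \<le> ereal ((c - (\<Sum>k\<in>{1..K}. lam k)) \<bullet> 0 + (\<Sum>k\<in>{1..K}. lam k \<bullet> w (blk k)))"
    unfolding LR_def
    by (intro Inf_lower CollectI exI[of _ 0] exI[of _ "\<lambda>k. w (blk k)"]) (simp add: glued_feasible)
  ultimately show ?thesis
    using glued_value by (simp add: mu_def)
qed

theorem corollary2:
  fixes c :: "'a::euclidean_space"
    and K P :: nat
    and D :: "nat \<Rightarrow> 'i set"
    and C :: "nat \<Rightarrow> 'i \<Rightarrow> 'a set"
    and F :: "nat \<Rightarrow> 'a set"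
    and lam :: "nat \<Rightarrow> 'a"
    and J :: "nat \<Rightarrow> nat set"
    and zstar :: ereal
  assumes K_pos: "K \<ge> 1"
    and D_fin: "\<forall>k\<in>{1..K}. finite (D k)"
    and C_cc: "\<forall>k\<in>{1..K}. \<forall>i\<in>D k. compact (C k i) \<and> convex (C k i)"
    and F_def: "\<forall>k\<in>{1..K}. F k = (\<Union>i\<in>D k. C k i)"
    and zstar_def: "zstar = Inf ((\<lambda>x. ereal (c \<bullet> x)) ` (\<Inter>k\<in>{1..K}. F k))"
    and lam_sum: "(\<Sum>k\<in>{1..K}. lam k) = c"
    and J_nonempty: "\<forall>q\<in>{1..P}. J q \<noteq> {}"
    and J_disj: "\<forall>p\<in>{1..P}. \<forall>q\<in>{1..P}. p \<noteq> q \<longrightarrow> J p \<inter> J q = {}"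
    and J_cover: "(\<Union>q\<in>{1..P}. J q) = {1..K}"
  shows "zstar = Lpart 1 (\<lambda>_. {1..K}) F (\<lambda>_. \<Sum>k\<in>{1..K}. lam k)
       \<and> Lpart 1 (\<lambda>_. {1..K}) F (\<lambda>_. \<Sum>k\<in>{1..K}. lam k) \<ge> zHR c P J F
       \<and> zHR c P J F \<ge> zLD c P J F
       \<and> zLD c P J F \<ge> Lpart P J F (\<lambda>q. \<Sum>j\<in>J q. lam j)
       \<and> Lpart P J F (\<lambda>q. \<Sum>j\<in>J q. lam j) \<ge> LR c K F lam
       \<and> ((\<exists>mu. HR_optimal_multipliers c P J F mu) \<longrightarrow> zHR c P J F = zLD c P J F)"
proof -
  have disj: "disjoint_family_on J {1..P}"
    using J_disj unfolding disjoint_family_on_def .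
  have F_compact: "\<forall>k\<in>{1..K}. compact (F k)"
    using F_def D_fin C_cc by auto
  then have Fq_compact: "\<forall>q\<in>{1..P}. compact (Fq J F q)"
    using J_nonempty J_cover by (intro ballI compact_Fq) blast+
  have "(\<Sum>q\<in>{1..P}. \<Sum>j\<in>J q. lam j) = c"
    using sum_over_partition[OF disj finite_atLeastAtMost J_cover finite_atLeastAtMost, where g = lam] lam_sum
    by simp
  then have "Lpart P J F (\<lambda>q. \<Sum>j\<in>J q. lam j) \<le> zLD c P J F"
    by (rule Lpart_le_zLD)
  moreover have "Lpart 1 (\<lambda>_. {1..K}) F (\<lambda>_. \<Sum>k\<in>{1..K}. lam k) = zstar"
    unfolding Lpart_def zstar_def lam_sum by simp
  moreover have "zHR c P J F \<le> zstar"
    unfolding zstar_def by (rule zHR_le_Inf_Inter[OF equalityD1[OF J_cover]])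
  moreover have LD_le_HR: "zLD c P J F \<le> zHR c P J F"
    by (rule zLD_le_zHR[OF Fq_compact])
  moreover have "zHR c P J F = zLD c P J F" if "HR_optimal_multipliers c P J F mu" for mu
    using zHR_le_zLD_if_optimal_multipliers[OF that] LD_le_HR by (rule order.antisym)
  moreover have "LR c K F lam \<le> Lpart P J F (\<lambda>q. \<Sum>j\<in>J q. lam j)"
    by (rule LR_le_Lpart[OF disj J_cover Fq_compact])
  ultimately show ?thesis
    by auto
qed

end
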